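(* There is an algorithm that, given a finite nonempty set $V$ and a partial function $\tilde x$ from a subset $\operatorname{dom}(\tilde x)\subseteq P_V$ to $\{0,1\}$, decides whether $X_V[\tilde x]\neq\emptyset$ in time polynomial in $|V|$.
   Context: For a finite nonempty set $V$, let $P_V=\{pq\in V^2\mid p\neq q\}$ (ordered pairs of distinct elements). Let $X_V$ be the set of all $x\in\{0,1\}^{P_V}$ such that $x_{pq}+x_{qr}-x_{pr}\le 1$ for all pairwise distinct $p,q,r\in V$. For a partial function $\tilde x$ (a map from some $\operatorname{dom}(\tilde x)\subseteq P_V$ to $\{0,1\}$), the set of completions is $X_V[\tilde x]=\{x\in X_V\mid x_{pq}=\tilde x_{pq}\text{ for all }pq\in\operatorname{dom}(\tilde x)\}$. *)

theory Defs
  imports Main "HOL-Library.FuncSet"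
begin

definition P :: "'a set \<Rightarrow> ('a \<times> 'a) set" where
  "P V = {(p, q). p \<in> V \<and> q \<in> V \<and> p \<noteq> q}"

definition X :: "'a set \<Rightarrow> (('a \<times> 'a) \<Rightarrow> nat) set" where
  "X V = {x \<in> P V \<rightarrow>\<^sub>E {0, 1}.
     \<forall>p\<in>V. \<forall>q\<in>V. \<forall>r\<in>V. p \<noteq> q \<and> q \<noteq> r \<and> p \<noteq> r \<longrightarrow>
       int (x (p, q)) + int (x (q, r)) - int (x (p, r)) \<le> 1}"

definition completions :: "'a set \<Rightarrow> (('a \<times> 'a) \<rightharpoonup> nat) \<Rightarrow> (('a \<times> 'a) \<Rightarrow> nat) set" where
  "completions V xt = {x \<in> X V. \<forall>pq \<in> dom xt. x pq = the (xt pq)}"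

datatype instr =
    Const nat nat
  | Add nat nat nat
  | Sub nat nat nat
  | Load nat nat
  | Store nat nat
  | Jz nat nat
  | Jmp nat
  | Halt

type_synonym config = "nat \<times> (nat \<Rightarrow> nat)"

definition halted :: "instr list \<Rightarrow> config \<Rightarrow> bool" where
  "halted prog s = (fst s \<ge> length prog \<or> prog ! fst s = Halt)"

fun exec :: "instr \<Rightarrow> config \<Rightarrow> config" where
  "exec (Const r c) (pc, M) = (Suc pc, M(r := c))"
| "exec (Add r a b) (pc, M) = (Suc pc, M(r := M a + M b))"
| "exec (Sub r a b) (pc, M) = (Suc pc, M(r := M a - M b))"
| "exec (Load r a) (pc, M) = (Suc pc, M(r := M (M a)))"
| "exec (Store a b) (pc, M) = (Suc pc, M(M a := M b))"
| "exec (Jz r l) (pc, M) = (if M r = 0 then (l, M) else (Suc pc, M))"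
| "exec (Jmp l) (pc, M) = (l, M)"
| "exec Halt (pc, M) = (pc, M)"

definition step :: "instr list \<Rightarrow> config \<Rightarrow> config" where
  "step prog s = (if halted prog s then s else exec (prog ! fst s) s)"

definition run :: "instr list \<Rightarrow> nat \<Rightarrow> (nat \<Rightarrow> nat) \<Rightarrow> config" where
  "run prog t M = (step prog ^^ t) (0, M)"

text \<open>V is presented via an enumeration e : {0..<n} -> V. Memory cell 0 holds n;
  cell 1 + i*n + j holds 0 if (e i, e j) is not in dom xt, and v+1 if xt (e i, e j) = Some v.
  All other cells hold 0.\<close>
definition input_mem :: "nat \<Rightarrow> (nat \<Rightarrow> 'a) \<Rightarrow> (('a \<times> 'a) \<rightharpoonup> nat) \<Rightarrow> nat \<Rightarrow> nat" where
  "input_mem n e xt a =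
     (if a = 0 then n
      else if a \<le> n * n then
        (case xt (e ((a - 1) div n), e ((a - 1) mod n)) of None \<Rightarrow> 0 | Some v \<Rightarrow> Suc v)
      else 0)"

end

theory Submission
  imports Defs
begin

(* A partial assignment is completable iff no pair forced to 0 is reachable through pairs forced
   to 1: the transitivity inequalities propagate forced 1s along paths, and conversely the
   indicator of the transitive closure of the forced 1s satisfies every transitivity inequality.
   The decider computes this closure with Floyd-Warshall, in O(n^3) steps of the unit-cost RAM. *)

section \<open>Transitive closure and completability\<close>

fun fw_closure :: "(nat \<Rightarrow> nat \<Rightarrow> bool) \<Rightarrow> nat \<Rightarrow> nat \<Rightarrow> nat \<Rightarrow> bool" where
  "fw_closure E 0 i j = E i j"
| "fw_closure E (Suc k) i j = (fw_closure E k i j \<or> fw_closure E k i k \<and> fw_closure E k k j)"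

lemma fw_closure_base: "E i j \<Longrightarrow> fw_closure E k i j"
  by (induction k) auto

lemma fw_closure_trans:
  "m < k \<Longrightarrow> fw_closure E k i m \<Longrightarrow> fw_closure E k m j \<Longrightarrow> fw_closure E k i j"
proof (induction k arbitrary: i j)
  case (Suc k)
  then show ?case
    by (cases "m = k") (auto dest: less_SucE)
qed simp

lemma fw_closure_Suc_pivot_col: "fw_closure E (Suc k) i k = fw_closure E k i k"
  by auto

lemma fw_closure_Suc_pivot_row: "fw_closure E (Suc k) k j = fw_closure E k k j"
  by auto

lemma fw_closure_cong:
  assumes "\<And>i j. i < n \<Longrightarrow> j < n \<Longrightarrow> E i j = E' i j" and "k \<le> n" "i < n" "j < n"
  shows "fw_closure E k i j = fw_closure E' k i j"
  using assms(2-) by (induction k arbitrary: i j) (simp_all add: assms(1))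

lemma completion_eq_1_on_closure:
  assumes x: "x \<in> completions V xt" and e: "bij_betw e {0..<n} V"
    and "fw_closure (\<lambda>i j. xt (e i, e j) = Some 1) k i j"
    and "k \<le> n" "i < n" "j < n" "i \<noteq> j"
  shows "x (e i, e j) = 1"
  using assms(3-)
proof (induction k arbitrary: i j)
  case 0
  then show ?case
    using x by (force simp: completions_def)
next
  case (Suc k)
  have eV: "e a \<in> V" and e_eq: "e a = e b \<longleftrightarrow> a = b" if "a < n" "b < n" for a b
    using e that by (auto simp: bij_betw_def inj_on_eq_iff)
  show ?case
  proof (cases "fw_closure (\<lambda>i j. xt (e i, e j) = Some 1) k i j \<or> i = k \<or> j = k")
    case True
    then show ?thesis
      using Suc by auto
  next
    case False
    then have "x (e i, e k) = 1" "x (e k, e j) = 1"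
      using Suc by auto
    moreover have "int (x (e i, e k)) + int (x (e k, e j)) - int (x (e i, e j)) \<le> 1"
      and "x (e i, e j) \<in> {0, 1}"
      using x False Suc.prems eV e_eq unfolding completions_def X_def P_def
      by (auto simp: PiE_iff)
    ultimately show ?thesis
      by auto
  qed
qed

lemma closure_indicator_completion:
  fixes xt :: "('a \<times> 'a) \<rightharpoonup> nat"
  assumes e: "bij_betw e {0..<n} V" and ran: "ran xt \<subseteq> {0, 1}"
    and no_conflict: "\<And>i j. i < n \<Longrightarrow> j < n \<Longrightarrow> xt (e i, e j) = Some 0 \<Longrightarrow>
        \<not> fw_closure (\<lambda>i j. xt (e i, e j) = Some 1) n i j"
    and dom: "dom xt \<subseteq> P V"
  defines "x \<equiv> \<lambda>(p, q). if (p, q) \<in> P V then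
      (if fw_closure (\<lambda>i j. xt (e i, e j) = Some 1) n (the_inv_into {0..<n} e p)
            (the_inv_into {0..<n} e q) then 1 else 0) else undefined"
  shows "x \<in> completions V xt"
proof -
  let ?R = "fw_closure (\<lambda>i j. xt (e i, e j) = Some 1) n"
  let ?ix = "the_inv_into {0..<n} e"
  have ix: "?ix p < n" "e (?ix p) = p" if "p \<in> V" for p
    using e that by (auto simp: bij_betw_def the_inv_into_f_f f_the_inv_into_f)
  have "x \<in> X V"
    unfolding X_def
  proof (intro CollectI conjI PiE_I ballI impI)
    fix p q r assume "p \<in> V" "q \<in> V" "r \<in> V" "p \<noteq> q \<and> q \<noteq> r \<and> p \<noteq> r"
    moreover have "?R (?ix p) (?ix q) \<Longrightarrow> ?R (?ix q) (?ix r) \<Longrightarrow> ?R (?ix p) (?ix r)"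
      using fw_closure_trans ix \<open>q \<in> V\<close> by blast
    ultimately show "int (x (p, q)) + int (x (q, r)) - int (x (p, r)) \<le> 1"
      by (auto simp: x_def P_def)
  qed (auto simp: x_def)
  moreover have "x (p, q) = the (xt (p, q))" if pq_dom: "(p, q) \<in> dom xt" for p q
  proof -
    obtain v where v: "xt (p, q) = Some v" and pq: "(p, q) \<in> P V"
      using pq_dom dom by auto
    then have "v \<in> {0, 1}"
      using ran by (auto intro: ranI)
    moreover have "p \<in> V" "q \<in> V"
      using pq by (auto simp: P_def)
    ultimately show ?thesis
      using v pq ix[of p] ix[of q] no_conflict[of "?ix p" "?ix q"]
        fw_closure_base[of "\<lambda>i j. xt (e i, e j) = Some 1" "?ix p" "?ix q" n]
      by (auto simp: x_def)
  qed
  ultimately show ?thesis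
    by (auto simp: completions_def)
qed

theorem completions_nonempty_iff:
  assumes e: "bij_betw e {0..<n} V" and "dom xt \<subseteq> P V" "ran xt \<subseteq> {0, 1}"
  shows "completions V xt \<noteq> {} \<longleftrightarrow>
    \<not> (\<exists>i<n. \<exists>j<n. xt (e i, e j) = Some 0 \<and> fw_closure (\<lambda>i j. xt (e i, e j) = Some 1) n i j)"
proof
  assume "completions V xt \<noteq> {}"
  then obtain x where x: "x \<in> completions V xt"
    by blast
  show "\<not> (\<exists>i<n. \<exists>j<n. xt (e i, e j) = Some 0 \<and> fw_closure (\<lambda>i j. xt (e i, e j) = Some 1) n i j)"
  proof clarify
    fix i j assume ij: "i < n" "j < n" "xt (e i, e j) = Some 0"
      and "fw_closure (\<lambda>i j. xt (e i, e j) = Some 1) n i j"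
    moreover have "i \<noteq> j"
      using ij \<open>dom xt \<subseteq> P V\<close> by (auto simp: P_def)
    ultimately have "x (e i, e j) = 1"
      using completion_eq_1_on_closure[OF x e] by blast
    moreover have "x (e i, e j) = 0"
      using x ij by (force simp: completions_def)
    ultimately show False
      by simp
  qed
qed (use closure_indicator_completion assms in blast)

section \<open>A Hoare logic for the machine\<close>

text \<open>Runs are observed only at the control points in a set \<open>S\<close> of cut points.  The simplifier
  executes straight-line code with \<open>reaches_continue\<close> and stops at the first cut point with
  \<open>reaches_stop\<close>; the time index counts the steps taken, at least one.\<close>

definition reaches :: "nat set \<Rightarrow> instr list \<Rightarrow> config \<Rightarrow> (nat \<Rightarrow> config \<Rightarrow> bool) \<Rightarrow> bool" where
  "reaches S prog s Q \<longleftrightarrow>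
     (\<exists>t. fst ((step prog ^^ Suc t) s) \<in> S \<and> Q (Suc t) ((step prog ^^ Suc t) s))"

lemma reaches_stop:
  "fst (step prog s) \<in> S \<Longrightarrow> Q 1 (step prog s) \<Longrightarrow> reaches S prog s Q"
  unfolding reaches_def by (rule exI[of _ 0]) simp

lemma reaches_continue:
  assumes "fst (step prog s) \<notin> S"
  shows "reaches S prog s Q \<longleftrightarrow> reaches S prog (step prog s) (\<lambda>t. Q (Suc t))"
proof
  assume "reaches S prog s Q"
  then obtain t where t: "fst ((step prog ^^ Suc t) s) \<in> S" "Q (Suc t) ((step prog ^^ Suc t) s)"
    unfolding reaches_def by blast
  moreover from t assms obtain t' where "t = Suc t'"
    by (cases t) auto
  ultimately show "reaches S prog (step prog s) (\<lambda>t. Q (Suc t))"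
    unfolding reaches_def by (auto simp only: funpow_Suc_right o_apply)
next
  assume "reaches S prog (step prog s) (\<lambda>t. Q (Suc t))"
  then show "reaches S prog s Q"
    unfolding reaches_def by (metis funpow_Suc_right comp_apply)
qed

lemma reaches_mono: "reaches S prog s Q \<Longrightarrow> (\<And>t s. Q t s \<Longrightarrow> Q' t s) \<Longrightarrow> reaches S prog s Q'"
  unfolding reaches_def by blast

lemma reaches_bind:
  assumes "reaches S prog s R" and "\<And>t s'. R t s' \<Longrightarrow> reaches S prog s' (\<lambda>t'. Q (t + t'))"
  shows "reaches S prog s Q"
proof -
  let ?run = "\<lambda>t. step prog ^^ t"
  obtain t where "R (Suc t) (?run (Suc t) s)"
    using assms(1) unfolding reaches_def by blast
  then obtain t' where t': "fst (?run (Suc t') (?run (Suc t) s)) \<in> S"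
      "Q (Suc t + Suc t') (?run (Suc t') (?run (Suc t) s))"
    using assms(2) unfolding reaches_def by blast
  have "?run (Suc t') (?run (Suc t) s) = ?run (Suc (Suc t + t')) s"
    by (metis add_Suc_right add.commute comp_apply funpow_add)
  with t' show ?thesis
    unfolding reaches_def by (intro exI[of _ "Suc t + t'"]) simp
qed

definition hoare :: "nat set \<Rightarrow> instr list \<Rightarrow> ((nat \<Rightarrow> nat) \<Rightarrow> bool) \<Rightarrow> nat \<Rightarrow> nat \<Rightarrow> nat \<Rightarrow>
    ((nat \<Rightarrow> nat) \<Rightarrow> bool) \<Rightarrow> bool" where
  "hoare S prog Pre L T L' Post \<longleftrightarrow>
     (\<forall>M. Pre M \<longrightarrow> reaches S prog (L, M) (\<lambda>t s. t \<le> T \<and> fst s = L' \<and> Post (snd s)))"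

lemma hoareI:
  "(\<And>M. Pre M \<Longrightarrow> reaches S prog (L, M) (\<lambda>t s. t \<le> T \<and> fst s = L' \<and> Post (snd s))) \<Longrightarrow>
    hoare S prog Pre L T L' Post"
  unfolding hoare_def by blast

lemma hoareD:
  "hoare S prog Pre L T L' Post \<Longrightarrow> Pre M \<Longrightarrow>
    reaches S prog (L, M) (\<lambda>t s. t \<le> T \<and> fst s = L' \<and> Post (snd s))"
  unfolding hoare_def by blast

lemma hoare_conseq:
  assumes "hoare S prog Pre L T L' Post"
    and "\<And>M. Pre' M \<Longrightarrow> Pre M" "T \<le> T'" "\<And>M. Post M \<Longrightarrow> Post' M"
  shows "hoare S prog Pre' L T' L' Post'"
  using assms unfolding hoare_def by (fastforce elim: reaches_mono)

lemma hoare_seq: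
  assumes "hoare S prog Pre L T1 L' Mid" and "hoare S prog Mid L' T2 L'' Post"
  shows "hoare S prog Pre L (T1 + T2) L'' Post"
proof (rule hoareI)
  fix M assume "Pre M"
  show "reaches S prog (L, M) (\<lambda>t s. t \<le> T1 + T2 \<and> fst s = L'' \<and> Post (snd s))"
  proof (rule reaches_bind[OF hoareD[OF assms(1), OF \<open>Pre M\<close>],
        where Q = "\<lambda>t s. t \<le> T1 + T2 \<and> fst s = L'' \<and> Post (snd s)"])
    fix t s assume s: "t \<le> T1 \<and> fst s = L' \<and> Mid (snd s)"
    then obtain M' where s_eq: "s = (L', M')" and "Mid M'"
      by (cases s) simp
    show "reaches S prog s (\<lambda>t' s. t + t' \<le> T1 + T2 \<and> fst s = L'' \<and> Post (snd s))"
      using reaches_mono[OF hoareD[OF assms(2), OF \<open>Mid M'\<close>],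
          of "\<lambda>t' s. t + t' \<le> T1 + T2 \<and> fst s = L'' \<and> Post (snd s)"] s
      unfolding s_eq by auto
  qed
qed

lemma hoare_loop:
  assumes "\<And>c. c < N \<Longrightarrow> hoare S prog (Inv c) L T L (Inv (Suc c))"
    and "hoare S prog (Inv N) L T' L' Post"
  shows "hoare S prog (Inv 0) L (N * T + T') L' Post"
proof -
  have "hoare S prog (Inv c) L ((N - c) * T + T') L' Post" if "c \<le> N" for c
    using that
  proof (induction "N - c" arbitrary: c)
    case 0
    then show ?case
      using assms(2) by simp
  next
    case (Suc r)
    then have "c < N" and "N - c = Suc (N - Suc c)"
      by simp_all
    then have "(N - c) * T + T' = T + ((N - Suc c) * T + T')"
      by simp
    then show ?case
      using hoare_seq[OF assms(1) Suc.hyps(1)[of "Suc c"]] Suc.hyps(2) by (simp add: add.assoc)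
  qed
  from this[of 0] show ?thesis
    by simp
qed

lemma hoare_run:
  assumes "hoare S prog (\<lambda>M. M = I) 0 T L Post" and "\<And>M. halted prog (L, M)"
  shows "halted prog (run prog T I) \<and> Post (snd (run prog T I))"
proof -
  obtain t where t: "Suc t \<le> T" "fst ((step prog ^^ Suc t) (0, I)) = L"
      "Post (snd ((step prog ^^ Suc t) (0, I)))"
    using hoareD[OF assms(1), of I] unfolding reaches_def by auto
  define s where "s = (step prog ^^ Suc t) (0, I)"
  have "halted prog s"
    using assms(2)[of "snd s"] t(2) unfolding s_def by (metis prod.collapse)
  then have "(step prog ^^ m) s = s" for m
    by (induction m) (simp_all add: step_def)
  moreover have "run prog T I = (step prog ^^ (T - Suc t)) s"
    unfolding run_def s_def using t(1) by (metis funpow_add comp_apply le_add_diff_inverse2)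
  ultimately show ?thesis
    using \<open>halted prog s\<close> t(3) unfolding s_def by simp
qed

section \<open>The decision program\<close>

text \<open>Entry \<open>(i, j)\<close> of the input matrix sits in cell \<open>1 + i n + j\<close>, so it overlaps the registers.
  The program first packs cells 2 to 5 into register 1 as base-3 digits (cell 1 is a diagonal
  entry, hence 0), squares \<open>n\<close>, copies cells 6 to \<open>n\<^sup>2\<close> behind \<open>B = n\<^sup>2 + 32\<close> and unpacks the
  digits there.  It then runs Floyd-Warshall in place on the copy, adding 2 to every entry 0 or 1
  that becomes reachable, and finally outputs 0 iff some entry equals 3, that is, a pair forced to
  0 is reachable.\<close>

definition pack_code :: "instr list" where
  "pack_code =
    [Add 1 1 2, Add 2 1 1, Add 2 2 1, Add 1 2 3, Add 2 1 1, Add 2 2 1, Add 1 2 4,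
     Add 2 1 1, Add 2 2 1, Add 1 2 5, Const 4 1, Const 3 0, Add 2 0 3]"

definition square_code :: "instr list" where
  "square_code = [Jz 2 17, Add 3 3 0, Sub 2 2 4, Jmp 13]"

definition copy_code :: "instr list" where
  "copy_code =
    [Const 2 0, Add 2 2 3, Add 3 3 3, Const 5 32, Add 3 3 5,
     Const 5 5, Sub 5 2 5, Jz 5 30, Load 5 2, Store 3 5, Sub 2 2 4, Sub 3 3 4, Jmp 22,
     Sub 6 3 2, Const 7 1, Add 8 6 7, Const 9 0, Store 8 9]"

definition unpack_digit_code :: "nat \<Rightarrow> nat \<Rightarrow> nat \<Rightarrow> instr list" where
  "unpack_digit_code L c w =
    [Const 7 c, Add 8 6 7,
     Const 7 (2 * w - 1), Sub 9 1 7, Jz 9 (L + 10),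
     Const 9 2, Store 8 9, Const 7 (2 * w), Sub 1 1 7, Jmp (L + 20),
     Const 7 (w - 1), Sub 9 1 7, Jz 9 (L + 18),
     Const 9 1, Store 8 9, Const 7 w, Sub 1 1 7, Jmp (L + 20),
     Const 9 0, Store 8 9]"

definition fw_code :: "instr list" where
  "fw_code =
    [Const 10 1, Const 11 0, Add 14 6 10,
     Sub 17 0 11, Jz 17 151, Const 12 0, Add 15 6 10,
     Sub 17 0 12, Jz 17 148, Const 13 0,
     Sub 17 0 13, Jz 17 145,
     Add 16 15 11, Load 17 16, Sub 17 17 10, Jz 17 143,
     Add 16 14 13, Load 17 16, Sub 17 17 10, Jz 17 143,
     Add 16 15 13, Load 17 16, Sub 18 17 10, Jz 18 140, Jmp 143,
     Const 18 2, Add 17 17 18, Store 16 17,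
     Add 13 13 10, Jmp 125,
     Add 12 12 10, Add 15 15 0, Jmp 122,
     Add 11 11 10, Add 14 14 0, Jmp 118]"

definition scan_code :: "instr list" where
  "scan_code =
    [Const 19 1, Add 16 6 10,
     Sub 17 14 16, Jz 17 162, Load 17 16, Const 18 2, Sub 17 17 18, Jz 17 160, Const 19 0,
     Add 16 16 10, Jmp 153,
     Const 7 0, Add 0 19 7, Halt]"

definition decider :: "instr list" where
  "decider = pack_code @ square_code @ copy_code @
     unpack_digit_code 35 2 27 @ unpack_digit_code 55 3 9 @ unpack_digit_code 75 4 3 @
     unpack_digit_code 95 5 1 @ fw_code @ scan_code"

definition cut_points :: "nat set" where
  "cut_points = {13, 17, 22, 30, 35, 55, 75, 95, 115, 118, 122, 125, 145, 148, 151, 153, 164}"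

lemma length_code_blocks:
  "length pack_code = 13" "length square_code = 4" "length copy_code = 18"
  "length (unpack_digit_code L c w) = 20" "length fw_code = 36" "length scan_code = 14"
  by (simp_all add: pack_code_def square_code_def copy_code_def unpack_digit_code_def
      fw_code_def scan_code_def)

lemma length_decider: "length decider = 165"
  by (simp add: decider_def length_code_blocks)

lemma nth_decider:
  "pc < 13 \<Longrightarrow> decider ! pc = pack_code ! pc"
  "13 \<le> pc \<Longrightarrow> pc < 17 \<Longrightarrow> decider ! pc = square_code ! (pc - 13)"
  "17 \<le> pc \<Longrightarrow> pc < 35 \<Longrightarrow> decider ! pc = copy_code ! (pc - 17)"
  "35 \<le> pc \<Longrightarrow> pc < 55 \<Longrightarrow> decider ! pc = unpack_digit_code 35 2 27 ! (pc - 35)"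
  "55 \<le> pc \<Longrightarrow> pc < 75 \<Longrightarrow> decider ! pc = unpack_digit_code 55 3 9 ! (pc - 55)"
  "75 \<le> pc \<Longrightarrow> pc < 95 \<Longrightarrow> decider ! pc = unpack_digit_code 75 4 3 ! (pc - 75)"
  "95 \<le> pc \<Longrightarrow> pc < 115 \<Longrightarrow> decider ! pc = unpack_digit_code 95 5 1 ! (pc - 95)"
  "115 \<le> pc \<Longrightarrow> pc < 151 \<Longrightarrow> decider ! pc = fw_code ! (pc - 115)"
  "151 \<le> pc \<Longrightarrow> decider ! pc = scan_code ! (pc - 151)"
  by (auto simp: decider_def nth_append length_code_blocks)

lemmas symbolic_execution =
  reaches_stop reaches_continue step_def halted_def length_decider nth_decider cut_points_def
  pack_code_def square_code_def copy_code_def unpack_digit_code_def fw_code_def scan_code_def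

abbreviation "runs_to \<equiv> reaches cut_points decider"
abbreviation "triple \<equiv> hoare cut_points decider"

lemma halted_decider_164: "halted decider (164, M)"
  by (simp add: symbolic_execution)

definition stores_matrix :: "(nat \<Rightarrow> nat) \<Rightarrow> nat \<Rightarrow> nat \<Rightarrow> (nat \<Rightarrow> nat \<Rightarrow> nat) \<Rightarrow> bool" where
  "stores_matrix M B n A \<longleftrightarrow> (\<forall>i<n. \<forall>j<n. M (B + 1 + i * n + j) = A i j)"

lemma matrix_index_less: "i < n \<Longrightarrow> j < n \<Longrightarrow> i * n + j < n * (n :: nat)"
proof -
  assume "i < n" "j < n"
  then have "i * n + j < (i + 1) * n"
    by simp
  also have "\<dots> \<le> n * n"
    using \<open>i < n\<close> by (intro mult_right_mono) auto
  finally show ?thesis .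
qed

lemma matrix_index_eq_iff:
  "a < n \<Longrightarrow> b < n \<Longrightarrow> j < n \<Longrightarrow> a * n + b = i * n + j \<longleftrightarrow> a = i \<and> b = (j :: nat)"
  by (metis add.commute div_mult_self1 div_less less_zeroE mod_mult_self1 mod_less add_0)

lemma stores_matrix_upd_reg: "r \<le> B \<Longrightarrow> stores_matrix (M(r := v)) B n A \<longleftrightarrow> stores_matrix M B n A"
  by (simp add: stores_matrix_def)

lemma stores_matrix_cong:
  "(\<And>i j. i < n \<Longrightarrow> j < n \<Longrightarrow> A i j = A' i j) \<Longrightarrow> stores_matrix M B n A \<longleftrightarrow> stores_matrix M B n A'"
  by (simp add: stores_matrix_def)

lemma stores_matrix_change_entry:
  assumes "stores_matrix M B n F" "i < n" "j < n"
    and "M' (B + 1 + i * n + j) = G i j"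
    and "\<And>a. B < a \<Longrightarrow> a \<noteq> B + 1 + i * n + j \<Longrightarrow> M' a = M a"
    and "\<And>a b. a < n \<Longrightarrow> b < n \<Longrightarrow> (a, b) \<noteq> (i, j) \<Longrightarrow> G a b = F a b"
  shows "stores_matrix M' B n G"
  unfolding stores_matrix_def
proof (intro allI impI)
  fix a b assume "a < n" "b < n"
  then show "M' (B + 1 + a * n + b) = G a b"
    using assms matrix_index_eq_iff[of a n b j i]
    by (cases "(a, b) = (i, j)") (auto simp: stores_matrix_def)
qed

lemma stores_matrix_linear:
  assumes "stores_matrix M B n F" "a < n * n"
  shows "M (B + 1 + a) = F (a div n) (a mod n)"
proof -
  have "0 < n"
    using assms(2) by (cases n) auto
  then have "a div n < n" "a mod n < n"
    using assms(2) by (simp_all add: less_mult_imp_div_less)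
  then have "M (B + 1 + a div n * n + a mod n) = F (a div n) (a mod n)"
    using assms(1) unfolding stores_matrix_def by blast
  then show ?thesis
    by (metis add.assoc div_mult_mod_eq)
qed

lemma ex_less_square_iff: "(\<exists>a<n * n :: nat. Q (a div n) (a mod n)) \<longleftrightarrow> (\<exists>i<n. \<exists>j<n. Q i j)"
proof
  assume "\<exists>a<n * n. Q (a div n) (a mod n)"
  then obtain a where "a < n * n" "Q (a div n) (a mod n)"
    by blast
  moreover from \<open>a < n * n\<close> have "0 < n"
    by (cases n) auto
  ultimately show "\<exists>i<n. \<exists>j<n. Q i j"
    by (metis less_mult_imp_div_less mod_less_divisor)
next
  assume "\<exists>i<n. \<exists>j<n. Q i j"
  then obtain i j where "i < n" "j < n" "Q i j"
    by blast
  then show "\<exists>a<n * n. Q (a div n) (a mod n)"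
    using matrix_index_less[of i n j] by (intro exI[of _ "i * n + j"]) simp
qed

lemma input_mem_entry:
  assumes "i < n" "j < n"
  shows "input_mem n e xt (1 + i * n + j) = (case xt (e i, e j) of None \<Rightarrow> 0 | Some v \<Rightarrow> Suc v)"
  using matrix_index_less[OF assms] assms by (simp add: input_mem_def)

section \<open>Relocating the input\<close>

definition packed :: "(nat \<Rightarrow> nat) \<Rightarrow> nat \<Rightarrow> nat" where
  "packed I c = (\<Sum>a = c..<6. 3 ^ (5 - a) * I a)"

lemma packed_Suc: "c < 6 \<Longrightarrow> packed I c = 3 ^ (5 - c) * I c + packed I (c + 1)"
  unfolding packed_def by (simp add: sum.atLeast_Suc_lessThan)

lemma packed_6: "packed I 6 = 0"
  by (simp add: packed_def)

lemma packed_less: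
  assumes "\<And>a. 0 < a \<Longrightarrow> I a \<le> 2" and "0 < c"
  shows "packed I c < 3 ^ (6 - c)"
  using assms(2)
proof (induction "6 - c" arbitrary: c)
  case 0
  then show ?case
    by (simp add: packed_def)
next
  case (Suc r)
  then have "c < 6" "packed I (c + 1) < 3 ^ (5 - c)"
    using Suc.hyps(1)[of "c + 1"] by simp_all
  have "packed I c = 3 ^ (5 - c) * I c + packed I (c + 1)"
    using \<open>c < 6\<close> by (rule packed_Suc)
  also have "\<dots> < 3 ^ (5 - c) * 2 + 3 ^ (5 - c)"
    using assms(1)[of c] Suc.prems \<open>packed I (c + 1) < 3 ^ (5 - c)\<close>
    by (intro add_le_less_mono mult_le_mono2) simp_all
  also have "\<dots> = 3 ^ (6 - c)"
    using \<open>c < 6\<close> by (simp flip: power_Suc add: Suc_diff_Suc)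
  finally show ?case .
qed

definition square_inv :: "(nat \<Rightarrow> nat) \<Rightarrow> nat \<Rightarrow> (nat \<Rightarrow> nat) \<Rightarrow> bool" where
  "square_inv I c M \<longleftrightarrow> M 0 = I 0 \<and> M 1 = packed I 2 \<and> M 2 = I 0 - c \<and> M 3 = c * I 0 \<and> M 4 = 1 \<and>
     (\<forall>a\<ge>6. M a = I a)"

lemma pack_cells: "I 1 = 0 \<Longrightarrow> triple (\<lambda>M. M = I) 0 13 13 (square_inv I 0)"
  unfolding square_inv_def by (rule hoareI) (simp add: symbolic_execution packed_Suc packed_6)

lemma square_loop: "triple (square_inv I 0) 13 (I 0 * 4 + 1) 17 (square_inv I (I 0))"
proof (rule hoare_loop)
  fix c assume "c < I 0"
  then show "triple (square_inv I c) 13 4 13 (square_inv I (Suc c))"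
    unfolding square_inv_def by (intro hoareI) (simp add: symbolic_execution)
next
  show "triple (square_inv I (I 0)) 13 1 17 (square_inv I (I 0))"
    unfolding square_inv_def by (intro hoareI) (simp add: symbolic_execution)
qed

lemma copy_block:
  assumes "M 2 = p" "M 3 = q" "M 4 = 1" "5 < p" "5 < q"
  shows "runs_to (22, M) (\<lambda>t s. t \<le> 8 \<and> s = (22, M(5 := M p, q := M p, 2 := p - 1, 3 := q - 1)))"
  using assms by (simp add: symbolic_execution)

definition copy_inv :: "(nat \<Rightarrow> nat) \<Rightarrow> nat \<Rightarrow> nat \<Rightarrow> (nat \<Rightarrow> nat) \<Rightarrow> bool" where
  "copy_inv I N c M \<longleftrightarrow> M 0 = I 0 \<and> M 1 = packed I 2 \<and> M 2 = N - c \<and> M 3 = N - c + (N + 32) \<and>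
     M 4 = 1 \<and> (\<forall>a. 6 \<le> a \<and> a \<le> N \<longrightarrow> M a = I a) \<and>
     (\<forall>a. N - c < a \<and> a \<le> N \<longrightarrow> M (N + 32 + a) = I a)"

lemma copy_inv_Suc:
  assumes c: "c < N - 5" and inv: "copy_inv I N c M"
  defines "p \<equiv> N - c"
  shows "copy_inv I N (Suc c) (M(5 := M p, p + (N + 32) := M p, 2 := p - 1, 3 := p + (N + 32) - 1))"
    (is "copy_inv I N (Suc c) ?M'")
proof -
  have regs: "M 0 = I 0" "M 1 = packed I 2" "M 4 = 1" "M 2 = p" "M 3 = p + (N + 32)"
    and src: "\<And>a. 6 \<le> a \<Longrightarrow> a \<le> N \<Longrightarrow> M a = I a"
    and dst: "\<And>a. p < a \<Longrightarrow> a \<le> N \<Longrightarrow> M (N + 32 + a) = I a"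
    using inv unfolding copy_inv_def p_def by simp_all
  have p: "5 < p" "p \<le> N" "N - Suc c = p - 1"
    using c unfolding p_def by auto
  show ?thesis
    unfolding copy_inv_def
  proof (intro conjI allI impI; (elim conjE)?)
    fix a assume "6 \<le> a" "a \<le> N"
    then show "?M' a = I a"
      using src by simp
  next
    fix a assume "N - Suc c < a" "a \<le> N"
    then show "?M' (N + 32 + a) = I a"
      using p dst[of a] src[of p] by (cases "a = p") (simp_all add: add.commute)
  qed (use regs p in simp_all)
qed

lemma copy_setup: "triple (square_inv I (I 0)) 17 5 22 (copy_inv I (I 0 * I 0) 0)"
  unfolding square_inv_def copy_inv_def by (intro hoareI) (simp add: symbolic_execution)

lemma copy_loop: "triple (copy_inv I N 0) 22 ((N - 5) * 8 + 3) 30 (copy_inv I N (N - 5))"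
proof (rule hoare_loop; rule hoareI)
  fix c M assume c: "c < N - 5" and inv: "copy_inv I N c M"
  let ?p = "N - c"
  have "runs_to (22, M) (\<lambda>t s. t \<le> 8 \<and>
      s = (22, M(5 := M ?p, ?p + (N + 32) := M ?p, 2 := ?p - 1, 3 := ?p + (N + 32) - 1)))"
    using c inv by (intro copy_block) (auto simp: copy_inv_def)
  then show "runs_to (22, M) (\<lambda>t s. t \<le> 8 \<and> fst s = 22 \<and> copy_inv I N (Suc c) (snd s))"
    using copy_inv_Suc[OF c inv] by (auto elim: reaches_mono)
next
  fix M assume inv: "copy_inv I N (N - 5) M"
  then have "runs_to (22, M) (\<lambda>t s. t \<le> 3 \<and> s = (30, M(5 := 0)))"
    by (simp add: copy_inv_def symbolic_execution)
  moreover have "copy_inv I N (N - 5) (M(5 := 0))"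
    using inv by (simp add: copy_inv_def)
  ultimately show "runs_to (22, M) (\<lambda>t s. t \<le> 3 \<and> fst s = 30 \<and> copy_inv I N (N - 5) (snd s))"
    by (auto elim: reaches_mono)
qed

lemma unpack_setup_block:
  assumes "M 3 - M 2 = B" "9 < B"
  shows "runs_to (30, M)
    (\<lambda>t s. t \<le> 5 \<and> s = (35, M(6 := B, 7 := 1, 8 := B + 1, 9 := 0, B + 1 := 0)))"
  using assms by (simp add: symbolic_execution)

definition unpack_inv :: "(nat \<Rightarrow> nat) \<Rightarrow> nat \<Rightarrow> nat \<Rightarrow> (nat \<Rightarrow> nat) \<Rightarrow> bool" where
  "unpack_inv I N c M \<longleftrightarrow> M 0 = I 0 \<and> M 1 = packed I c \<and> M 6 = N + 32 \<and>
     (\<forall>a. 0 < a \<and> a < c \<or> 6 \<le> a \<and> a \<le> N \<longrightarrow> M (N + 32 + a) = I a)"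

lemma unpack_setup:
  assumes "I 1 = 0"
  shows "triple (copy_inv I N (N - 5)) 30 5 35 (unpack_inv I N 2)"
proof (rule hoareI)
  fix M assume inv: "copy_inv I N (N - 5) M"
  let ?M' = "M(6 := N + 32, 7 := 1, 8 := N + 32 + 1, 9 := 0, N + 32 + 1 := 0)"
  have "runs_to (30, M) (\<lambda>t s. t \<le> 5 \<and> s = (35, ?M'))"
    using inv by (intro unpack_setup_block) (simp_all add: copy_inv_def)
  moreover have "unpack_inv I N 2 ?M'"
    unfolding unpack_inv_def
  proof (intro conjI allI impI)
    fix a assume "0 < a \<and> a < 2 \<or> 6 \<le> a \<and> a \<le> N"
    then consider "a = 1" | "6 \<le> a" "a \<le> N"
      by linarith
    then show "?M' (N + 32 + a) = I a"
      by cases (use assms inv in \<open>simp_all add: copy_inv_def\<close>)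
  qed (use inv in \<open>simp_all add: copy_inv_def packed_Suc packed_6\<close>)
  ultimately show "runs_to (30, M) (\<lambda>t s. t \<le> 5 \<and> fst s = 35 \<and> unpack_inv I N 2 (snd s))"
    by (auto elim: reaches_mono)
qed

lemma unpack_digit_block:
  assumes "(L, c, w) \<in> {(35, 2, 27), (55, 3, 9), (75, 4, 3), (95, 5, 1)}"
    and "M 1 = w * d + r" "d \<le> 2" "r < w" "M 6 = B" "9 < B"
  shows "runs_to (L, M) (\<lambda>t s. t \<le> 13 \<and> fst s = L + 20 \<and> snd s 1 = r \<and> snd s (B + c) = d \<and>
    (\<forall>a. a \<notin> {1, 7, 8, 9, B + c} \<longrightarrow> snd s a = M a))"
proof -
  have "d = 0 \<or> d = 1 \<or> d = 2"
    using assms(3) by auto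
  then show ?thesis
    using assms(1,2,4-) by (elim disjE) (auto simp: symbolic_execution)
qed

lemma unpack_digit:
  assumes c: "c \<in> {2, 3, 4, 5}" and bounded: "\<And>a. 0 < a \<Longrightarrow> I a \<le> 2"
  shows "triple (unpack_inv I N c) (20 * c - 5) 13 (20 * c + 15) (unpack_inv I N (Suc c))"
proof (rule hoareI)
  fix M assume inv: "unpack_inv I N c M"
  let ?w = "3 ^ (5 - c) :: nat" and ?B = "N + 32"
  have "(20 * c - 5, c, ?w) \<in> {(35, 2, 27), (55, 3, 9), (75, 4, 3), (95, 5, 1)}"
    using c by auto
  moreover have "M 1 = ?w * I c + packed I (c + 1)" "M 6 = ?B"
    using inv c packed_Suc[of c I] by (auto simp: unpack_inv_def)
  moreover have "I c \<le> 2" "packed I (c + 1) < ?w"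
    using c bounded packed_less[of I "c + 1"] by auto
  ultimately have run: "runs_to (20 * c - 5, M) (\<lambda>t s. t \<le> 13 \<and> fst s = 20 * c - 5 + 20 \<and>
      snd s 1 = packed I (c + 1) \<and> snd s (?B + c) = I c \<and>
      (\<forall>a. a \<notin> {1, 7, 8, 9, ?B + c} \<longrightarrow> snd s a = M a))"
    by (intro unpack_digit_block) auto
  show "runs_to (20 * c - 5, M)
    (\<lambda>t s. t \<le> 13 \<and> fst s = 20 * c + 15 \<and> unpack_inv I N (Suc c) (snd s))"
  proof (rule reaches_mono[OF run], elim conjE)
    fix t s assume s: "t \<le> 13" "fst s = 20 * c - 5 + 20" "snd s 1 = packed I (c + 1)"
      "snd s (?B + c) = I c" "\<forall>a. a \<notin> {1, 7, 8, 9, ?B + c} \<longrightarrow> snd s a = M a"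
    have "snd s (?B + a) = I a" if "0 < a \<and> a < Suc c \<or> 6 \<le> a \<and> a \<le> N" for a
      using that s(4,5) inv c by (cases "a = c") (auto simp: unpack_inv_def)
    then show "t \<le> 13 \<and> fst s = 20 * c + 15 \<and> unpack_inv I N (Suc c) (snd s)"
      using s inv c by (auto simp: unpack_inv_def)
  qed
qed

lemma unpack_digits:
  assumes "\<And>a. 0 < a \<Longrightarrow> I a \<le> 2"
  shows "triple (unpack_inv I N 2) 35 52 115 (unpack_inv I N 6)"
  using hoare_seq[OF hoare_seq[OF hoare_seq[OF
      unpack_digit[of 2 I N, simplified, OF assms] unpack_digit[of 3 I N, simplified, OF assms]]
      unpack_digit[of 4 I N, simplified, OF assms]] unpack_digit[of 5 I N, simplified, OF assms]]
  by simp

lemma unpack_inv_stores_matrix: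
  assumes "unpack_inv I (n * n) 6 M"
  shows "stores_matrix M (n * n + 32) n (\<lambda>i j. I (1 + i * n + j))"
  unfolding stores_matrix_def
proof (intro allI impI)
  fix i j assume "i < n" "j < n"
  define a where "a = 1 + i * n + j"
  have "0 < a \<and> a < 6 \<or> 6 \<le> a \<and> a \<le> n * n"
    using matrix_index_less[OF \<open>i < n\<close> \<open>j < n\<close>] unfolding a_def by linarith
  then have "M (n * n + 32 + a) = I a"
    using assms unfolding unpack_inv_def by blast
  then show "M (n * n + 32 + 1 + i * n + j) = I (1 + i * n + j)"
    unfolding a_def by (simp add: add.assoc)
qed

lemma relocate:
  assumes "I 1 = 0" and "\<And>a. 0 < a \<Longrightarrow> I a \<le> 2"
  defines "n \<equiv> I 0"
  shows "triple (\<lambda>M. M = I) 0 (12 * (n * n) + 79) 115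
    (\<lambda>M. M 0 = n \<and> M 6 = n * n + 32 \<and> stores_matrix M (n * n + 32) n (\<lambda>i j. I (1 + i * n + j)))"
proof (rule hoare_conseq)
  show "triple (\<lambda>M. M = I) 0 (13 + (n * 4 + 1) + 5 + ((n * n - 5) * 8 + 3) + 5 + 52) 115
    (unpack_inv I (n * n) 6)"
    unfolding n_def
    using hoare_seq[OF hoare_seq[OF hoare_seq[OF hoare_seq[OF hoare_seq[OF
        pack_cells[of I, OF assms(1)] square_loop] copy_setup] copy_loop]
        unpack_setup[of I, OF assms(1)]] unpack_digits[of I, OF assms(2)]] .
  have "n \<le> n * n"
    by simp
  then show "13 + (n * 4 + 1) + 5 + ((n * n - 5) * 8 + 3) + 5 + 52 \<le> 12 * (n * n) + 79"
    by linarith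
qed (use unpack_inv_stores_matrix[of I n] in \<open>simp_all add: unpack_inv_def n_def\<close>)

section \<open>Floyd-Warshall in place\<close>

text \<open>\<open>fw_state A k i j\<close> is the matrix in pass \<open>k\<close> of Floyd-Warshall just before entry
  \<open>(i, j)\<close> is relaxed, with every reachable entry 0 or 1 raised by 2.  Row and column \<open>k\<close> do not
  change during pass \<open>k\<close>, which is why relaxing in place is sound.\<close>

definition mark :: "bool \<Rightarrow> nat \<Rightarrow> nat" where
  "mark f v = (if f \<and> v < 2 then v + 2 else v)"

definition fw_state :: "(nat \<Rightarrow> nat \<Rightarrow> nat) \<Rightarrow> nat \<Rightarrow> nat \<Rightarrow> nat \<Rightarrow> nat \<Rightarrow> nat \<Rightarrow> nat" where
  "fw_state A k i j a b =
     mark (fw_closure (\<lambda>a b. A a b = 2) (if a < i \<or> a = i \<and> b < j then Suc k else k) a b) (A a b)"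

lemma fw_state_init: "fw_state A 0 0 0 = A"
  by (simp add: fw_state_def mark_def fun_eq_iff)

lemma fw_state_pivot_col: "fw_state A k i j a k = mark (fw_closure (\<lambda>a b. A a b = 2) k a k) (A a k)"
  by (simp add: fw_state_def fw_closure_Suc_pivot_col del: fw_closure.simps)

lemma fw_state_pivot_row: "fw_state A k i j k b = mark (fw_closure (\<lambda>a b. A a b = 2) k k b) (A k b)"
  by (simp add: fw_state_def fw_closure_Suc_pivot_row del: fw_closure.simps)

lemma fw_state_current: "fw_state A k i j i j = mark (fw_closure (\<lambda>a b. A a b = 2) k i j) (A i j)"
  by (simp add: fw_state_def)

lemma fw_state_Suc_current:
  "fw_state A k i (Suc j) i j = mark (fw_closure (\<lambda>a b. A a b = 2) (Suc k) i j) (A i j)"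
  by (simp add: fw_state_def)

lemma fw_state_Suc_other: "(a, b) \<noteq> (i, j) \<Longrightarrow> fw_state A k i (Suc j) a b = fw_state A k i j a b"
  by (auto simp: fw_state_def less_Suc_eq)

lemma fw_state_row_end: "b < n \<Longrightarrow> fw_state A k i n a b = fw_state A k (Suc i) 0 a b"
  by (auto simp: fw_state_def less_Suc_eq)

lemma fw_state_pivot_end: "a < n \<Longrightarrow> fw_state A k n 0 a b = fw_state A (Suc k) 0 0 a b"
  by (simp add: fw_state_def)

lemma fw_state_final: "fw_state A n 0 0 a b = mark (fw_closure (\<lambda>a b. A a b = 2) n a b) (A a b)"
  by (simp add: fw_state_def)

lemma mark_ge_2_iff: "v \<le> 2 \<Longrightarrow> (v = 2 \<Longrightarrow> f) \<Longrightarrow> 2 \<le> mark f v \<longleftrightarrow> f"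
  by (auto simp: mark_def)

lemma mark_gt_2_iff: "v \<le> 2 \<Longrightarrow> 2 < mark f v \<longleftrightarrow> f \<and> v = 1"
  by (auto simp: mark_def)

lemma relax_block:
  assumes "M 0 = n" "M 10 = 1" "M 11 = k" "M 13 = j" "M 14 = rk" "M 15 = ri"
    and "j < n" "18 < ri" "18 < rk"
  shows "runs_to (125, M) (\<lambda>t s. t \<le> 19 \<and> fst s = 125 \<and> snd s 13 = Suc j \<and>
     snd s (ri + j) = (if 2 \<le> M (ri + k) \<and> 2 \<le> M (rk + j) \<and> M (ri + j) < 2
                       then M (ri + j) + 2 else M (ri + j)) \<and>
     (\<forall>a. a \<notin> {13, 16, 17, 18, ri + j} \<longrightarrow> snd s a = M a))"
  using assms
  by (cases "2 \<le> M (ri + k)"; cases "2 \<le> M (rk + j)"; cases "M (ri + j) < 2")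
    (simp_all add: symbolic_execution)

definition fw_regs :: "nat \<Rightarrow> nat \<Rightarrow> nat \<Rightarrow> (nat \<Rightarrow> nat) \<Rightarrow> bool" where
  "fw_regs n B k M \<longleftrightarrow> M 0 = n \<and> M 6 = B \<and> M 10 = 1 \<and> M 11 = k \<and> M 14 = B + 1 + k * n \<and> 32 \<le> B"

definition pivot_inv :: "(nat \<Rightarrow> nat \<Rightarrow> nat) \<Rightarrow> nat \<Rightarrow> nat \<Rightarrow> nat \<Rightarrow> (nat \<Rightarrow> nat) \<Rightarrow> bool" where
  "pivot_inv A n B k M \<longleftrightarrow> fw_regs n B k M \<and> stores_matrix M B n (fw_state A k 0 0)"

definition row_inv :: "(nat \<Rightarrow> nat \<Rightarrow> nat) \<Rightarrow> nat \<Rightarrow> nat \<Rightarrow> nat \<Rightarrow> nat \<Rightarrow> (nat \<Rightarrow> nat) \<Rightarrow> bool" where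
  "row_inv A n B k i M \<longleftrightarrow> fw_regs n B k M \<and> k < n \<and> M 12 = i \<and> M 15 = B + 1 + i * n \<and>
     stores_matrix M B n (fw_state A k i 0)"

definition col_inv :: "(nat \<Rightarrow> nat \<Rightarrow> nat) \<Rightarrow> nat \<Rightarrow> nat \<Rightarrow> nat \<Rightarrow> nat \<Rightarrow> nat \<Rightarrow> (nat \<Rightarrow> nat) \<Rightarrow> bool" where
  "col_inv A n B k i j M \<longleftrightarrow> fw_regs n B k M \<and> k < n \<and> i < n \<and> M 12 = i \<and> M 15 = B + 1 + i * n \<and>
     M 13 = j \<and> stores_matrix M B n (fw_state A k i j)"

lemma relax_step:
  assumes "j < n" and A2: "\<And>a b. a < n \<Longrightarrow> b < n \<Longrightarrow> A a b \<le> 2"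
  shows "triple (col_inv A n B k i j) 125 19 125 (col_inv A n B k i (Suc j))"
proof (rule hoareI)
  fix M assume inv: "col_inv A n B k i j M"
  let ?E = "\<lambda>a b. A a b = 2" and ?ri = "B + 1 + i * n" and ?rk = "B + 1 + k * n"
  have regs: "M 0 = n" "M 10 = 1" "M 11 = k" "M 13 = j" "M 14 = ?rk" "M 15 = ?ri"
    and "k < n" "i < n" "32 \<le> B" and mat: "stores_matrix M B n (fw_state A k i j)"
    using inv by (simp_all add: col_inv_def fw_regs_def)
  have reach: "2 \<le> mark (fw_closure ?E k a b) (A a b) \<longleftrightarrow> fw_closure ?E k a b"
    if "a < n" "b < n" for a b
    using A2[OF that] by (intro mark_ge_2_iff) (auto intro: fw_closure_base)
  have ik: "M (?ri + k) = mark (fw_closure ?E k i k) (A i k)"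
    using mat \<open>i < n\<close> \<open>k < n\<close> by (simp add: stores_matrix_def fw_state_pivot_col add.assoc)
  have kj: "M (?rk + j) = mark (fw_closure ?E k k j) (A k j)"
    using mat \<open>j < n\<close> \<open>k < n\<close> by (simp add: stores_matrix_def fw_state_pivot_row add.assoc)
  have ij: "M (?ri + j) = mark (fw_closure ?E k i j) (A i j)"
    using mat \<open>i < n\<close> \<open>j < n\<close> by (simp add: stores_matrix_def fw_state_current add.assoc)
  have new: "(if 2 \<le> M (?ri + k) \<and> 2 \<le> M (?rk + j) \<and> M (?ri + j) < 2
      then M (?ri + j) + 2 else M (?ri + j)) = fw_state A k i (Suc j) i j"
    unfolding ik kj ij fw_state_Suc_current
    using reach[of i k] reach[of k j] reach[of i j] \<open>i < n\<close> \<open>j < n\<close> \<open>k < n\<close>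
    by (auto simp: mark_def)
  have "runs_to (125, M) (\<lambda>t s. t \<le> 19 \<and> fst s = 125 \<and> snd s 13 = Suc j \<and>
     snd s (?ri + j) = fw_state A k i (Suc j) i j \<and>
     (\<forall>a. a \<notin> {13, 16, 17, 18, ?ri + j} \<longrightarrow> snd s a = M a))"
    using relax_block[OF regs \<open>j < n\<close>] \<open>32 \<le> B\<close> new by simp
  then show "runs_to (125, M) (\<lambda>t s. t \<le> 19 \<and> fst s = 125 \<and> col_inv A n B k i (Suc j) (snd s))"
  proof (rule reaches_mono, elim conjE)
    fix t s assume s: "t \<le> 19" "fst s = 125" "snd s 13 = Suc j"
      "snd s (?ri + j) = fw_state A k i (Suc j) i j"
      "\<forall>a. a \<notin> {13, 16, 17, 18, ?ri + j} \<longrightarrow> snd s a = M a"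
    have "snd s a = M a" if "B < a" "a \<noteq> ?ri + j" for a
      using s(5) that \<open>32 \<le> B\<close> by auto
    then have "stores_matrix (snd s) B n (fw_state A k i (Suc j))"
      using stores_matrix_change_entry[where M' = "snd s" and G = "fw_state A k i (Suc j)",
          OF mat \<open>i < n\<close> \<open>j < n\<close> s(4)] fw_state_Suc_other
      by blast
    then show "t \<le> 19 \<and> fst s = 125 \<and> col_inv A n B k i (Suc j) (snd s)"
      using inv s \<open>32 \<le> B\<close> by (simp add: col_inv_def fw_regs_def)
  qed
qed

lemma col_loop:
  assumes "\<And>a b. a < n \<Longrightarrow> b < n \<Longrightarrow> A a b \<le> 2"
  shows "triple (col_inv A n B k i 0) 125 (n * 19 + 2) 145 (col_inv A n B k i n)"
proof (rule hoare_loop)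
  show "triple (col_inv A n B k i j) 125 19 125 (col_inv A n B k i (Suc j))" if "j < n" for j
    using that assms by (rule relax_step)
  show "triple (col_inv A n B k i n) 125 2 145 (col_inv A n B k i n)"
    unfolding col_inv_def fw_regs_def
    by (intro hoareI) (simp add: symbolic_execution stores_matrix_upd_reg)
qed

lemma row_step:
  assumes "\<And>a b. a < n \<Longrightarrow> b < n \<Longrightarrow> A a b \<le> 2" and "i < n"
  shows "triple (row_inv A n B k i) 122 (3 + (n * 19 + 2) + 3) 122 (row_inv A n B k (Suc i))"
proof -
  have "triple (row_inv A n B k i) 122 3 125 (col_inv A n B k i 0)"
    using \<open>i < n\<close> unfolding row_inv_def col_inv_def fw_regs_def
    by (intro hoareI) (simp add: symbolic_execution stores_matrix_upd_reg)
  moreover have "triple (col_inv A n B k i n) 145 3 122 (row_inv A n B k (Suc i))"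
    unfolding row_inv_def col_inv_def fw_regs_def
    by (intro hoareI) (simp add: symbolic_execution stores_matrix_upd_reg add.assoc
        stores_matrix_cong[OF fw_state_row_end])
  moreover have "triple (col_inv A n B k i 0) 125 (n * 19 + 2) 145 (col_inv A n B k i n)"
    using assms(1) by (rule col_loop)
  ultimately show ?thesis
    by (blast intro: hoare_seq)
qed

lemma row_loop:
  assumes "\<And>a b. a < n \<Longrightarrow> b < n \<Longrightarrow> A a b \<le> 2"
  shows "triple (row_inv A n B k 0) 122 (n * (n * 19 + 8) + 2) 148 (row_inv A n B k n)"
proof (rule hoare_loop)
  show "triple (row_inv A n B k i) 122 (n * 19 + 8) 122 (row_inv A n B k (Suc i))" if "i < n" for i
    using row_step[of n A i B k] assms that by (simp add: ac_simps)
  show "triple (row_inv A n B k n) 122 2 148 (row_inv A n B k n)"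
    unfolding row_inv_def fw_regs_def
    by (intro hoareI) (simp add: symbolic_execution stores_matrix_upd_reg)
qed

lemma pivot_step:
  assumes "\<And>a b. a < n \<Longrightarrow> b < n \<Longrightarrow> A a b \<le> 2" and "k < n"
  shows "triple (pivot_inv A n B k) 118 (4 + (n * (n * 19 + 8) + 2) + 3) 118
    (pivot_inv A n B (Suc k))"
proof -
  have "triple (pivot_inv A n B k) 118 4 122 (row_inv A n B k 0)"
    using \<open>k < n\<close> unfolding pivot_inv_def row_inv_def fw_regs_def
    by (intro hoareI) (simp add: symbolic_execution stores_matrix_upd_reg)
  moreover have "triple (row_inv A n B k n) 148 3 118 (pivot_inv A n B (Suc k))"
    unfolding pivot_inv_def row_inv_def fw_regs_def
    by (intro hoareI) (simp add: symbolic_execution stores_matrix_upd_reg add.assoc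
        stores_matrix_cong[OF fw_state_pivot_end])
  moreover have "triple (row_inv A n B k 0) 122 (n * (n * 19 + 8) + 2) 148 (row_inv A n B k n)"
    using assms(1) by (rule row_loop)
  ultimately show ?thesis
    by (blast intro: hoare_seq)
qed

lemma floyd_warshall:
  assumes "\<And>a b. a < n \<Longrightarrow> b < n \<Longrightarrow> A a b \<le> 2" and "32 \<le> B"
  shows "triple (\<lambda>M. M 0 = n \<and> M 6 = B \<and> stores_matrix M B n A) 115
    (n * (n * (n * 19 + 8) + 9) + 5) 151 (pivot_inv A n B n)"
proof -
  have "triple (\<lambda>M. M 0 = n \<and> M 6 = B \<and> stores_matrix M B n A) 115 3 118 (pivot_inv A n B 0)"
    using \<open>32 \<le> B\<close> unfolding pivot_inv_def fw_regs_def
    by (intro hoareI) (simp add: symbolic_execution stores_matrix_upd_reg fw_state_init)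
  moreover have
    "triple (pivot_inv A n B 0) 118 (n * (n * (n * 19 + 8) + 9) + 2) 151 (pivot_inv A n B n)"
  proof (rule hoare_loop)
    show "triple (pivot_inv A n B k) 118 (n * (n * 19 + 8) + 9) 118 (pivot_inv A n B (Suc k))"
      if "k < n" for k
      using pivot_step[of n A k B] assms that by (simp add: ac_simps)
    show "triple (pivot_inv A n B n) 118 2 151 (pivot_inv A n B n)"
      unfolding pivot_inv_def fw_regs_def
      by (intro hoareI) (simp add: symbolic_execution stores_matrix_upd_reg)
  qed
  ultimately have "triple (\<lambda>M. M 0 = n \<and> M 6 = B \<and> stores_matrix M B n A) 115
      (3 + (n * (n * (n * 19 + 8) + 9) + 2)) 151 (pivot_inv A n B n)"
    by (rule hoare_seq)
  then show ?thesis
    by (simp add: ac_simps)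
qed

definition scan_inv :: "nat \<Rightarrow> nat \<Rightarrow> (nat \<Rightarrow> nat) \<Rightarrow> nat \<Rightarrow> (nat \<Rightarrow> nat) \<Rightarrow> bool" where
  "scan_inv B N G c M \<longleftrightarrow> M 10 = 1 \<and> M 14 = B + 1 + N \<and> M 16 = B + 1 + c \<and> c \<le> N \<and>
     M 19 = (if \<exists>a<c. 2 < G a then 0 else 1) \<and> (\<forall>a<N. M (B + 1 + a) = G a) \<and> 32 \<le> B"

lemma scan_loop:
  "triple (scan_inv B N G 0) 153 (N * 9 + 4) 164 (\<lambda>M. M 0 = (if \<exists>a<N. 2 < G a then 0 else 1))"
proof (rule hoare_loop)
  fix c assume "c < N"
  show "triple (scan_inv B N G c) 153 9 153 (scan_inv B N G (Suc c))"
  proof (rule hoareI)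
    fix M assume "scan_inv B N G c M"
    with \<open>c < N\<close>
    show "runs_to (153, M) (\<lambda>t s. t \<le> 9 \<and> fst s = 153 \<and> scan_inv B N G (Suc c) (snd s))"
      unfolding scan_inv_def by (cases "G c \<le> 2") (simp_all add: symbolic_execution Ex_less_Suc)
  qed
next
  show "triple (scan_inv B N G N) 153 4 164 (\<lambda>M. M 0 = (if \<exists>a<N. 2 < G a then 0 else 1))"
    unfolding scan_inv_def by (intro hoareI) (simp add: symbolic_execution)
qed

lemma scan_matrix:
  "triple (\<lambda>M. M 6 = B \<and> M 10 = 1 \<and> M 14 = B + 1 + N \<and> 32 \<le> B \<and> (\<forall>a<N. M (B + 1 + a) = G a))
     151 (N * 9 + 6) 164 (\<lambda>M. M 0 = (if \<exists>a<N. 2 < G a then 0 else 1))"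
proof -
  have "triple (\<lambda>M. M 6 = B \<and> M 10 = 1 \<and> M 14 = B + 1 + N \<and> 32 \<le> B \<and> (\<forall>a<N. M (B + 1 + a) = G a))
      151 2 153 (scan_inv B N G 0)"
    unfolding scan_inv_def by (intro hoareI) (simp add: symbolic_execution)
  from hoare_seq[OF this scan_loop] show ?thesis
    by (simp add: ac_simps)
qed

lemma decider_time_bound:
  "12 * (n * n) + 79 + (n * (n * (n * 19 + 8) + 9) + 5) + (n * n * 9 + 6)
    \<le> 100 * n ^ 3 + (100 :: nat)"
proof -
  have "n \<le> n * n * n" "n * n \<le> n * n * n"
    by (simp_all add: le_square le_cube)
  have "12 * (n * n) + 79 + (n * (n * (n * 19 + 8) + 9) + 5) + (n * n * 9 + 6)
      = 19 * (n * n * n) + 29 * (n * n) + 9 * n + 90"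
    by (simp add: algebra_simps)
  also have "\<dots> \<le> 19 * (n * n * n) + 29 * (n * n * n) + 9 * (n * n * n) + 90"
    using \<open>n \<le> n * n * n\<close> \<open>n * n \<le> n * n * n\<close> by linarith
  also have "\<dots> \<le> 100 * n ^ 3 + 100"
    by (simp add: power3_eq_cube)
  finally show ?thesis .
qed

lemma marked_conflict_iff:
  assumes "\<And>i j. A i j \<le> 2"
  shows "(\<exists>a<n * n. 2 < fw_state A n 0 0 (a div n) (a mod n)) \<longleftrightarrow>
    (\<exists>i<n. \<exists>j<n. A i j = 1 \<and> fw_closure (\<lambda>i j. A i j = 2) n i j)"
  using ex_less_square_iff[of n "\<lambda>i j. 2 < fw_state A n 0 0 i j"] mark_gt_2_iff[OF assms]
  by (simp add: fw_state_final conj_commute)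

lemma decider_correct:
  assumes "I 1 = 0" and bounded: "\<And>a. 0 < a \<Longrightarrow> I a \<le> 2"
  defines "n \<equiv> I 0"
  defines "A \<equiv> \<lambda>i j. I (1 + i * n + j)"
  shows "triple (\<lambda>M. M = I) 0 (100 * n ^ 3 + 100) 164
    (\<lambda>M. M 0 = (if \<exists>i<n. \<exists>j<n. A i j = 1 \<and> fw_closure (\<lambda>i j. A i j = 2) n i j then 0 else 1))"
proof -
  let ?B = "n * n + 32" and ?G = "\<lambda>a. fw_state A n 0 0 (a div n) (a mod n)"
  have A2: "A i j \<le> 2" for i j
    using bounded by (simp add: A_def)
  have "triple (\<lambda>M. M = I) 0 (12 * (n * n) + 79) 115
      (\<lambda>M. M 0 = n \<and> M 6 = ?B \<and> stores_matrix M ?B n A)"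
    using relocate[of I, OF assms(1) bounded] unfolding n_def A_def .
  moreover have "triple (\<lambda>M. M 0 = n \<and> M 6 = ?B \<and> stores_matrix M ?B n A) 115
      (n * (n * (n * 19 + 8) + 9) + 5) 151 (pivot_inv A n ?B n)"
    using A2 by (intro floyd_warshall) simp_all
  moreover have "triple (pivot_inv A n ?B n) 151 (n * n * 9 + 6) 164
      (\<lambda>M. M 0 = (if \<exists>a<n * n. 2 < ?G a then 0 else 1))"
  proof (rule hoare_conseq[OF scan_matrix[of ?B "n * n" ?G]])
    fix M assume "pivot_inv A n ?B n M"
    then show "M 6 = ?B \<and> M 10 = 1 \<and> M 14 = ?B + 1 + n * n \<and> 32 \<le> ?B \<and>
        (\<forall>a<n * n. M (?B + 1 + a) = ?G a)"
      using stores_matrix_linear[of M ?B n "fw_state A n 0 0"]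
      unfolding pivot_inv_def fw_regs_def by simp
  qed simp_all
  ultimately have "triple (\<lambda>M. M = I) 0
      (12 * (n * n) + 79 + (n * (n * (n * 19 + 8) + 9) + 5) + (n * n * 9 + 6)) 164
      (\<lambda>M. M 0 = (if \<exists>a<n * n. 2 < ?G a then 0 else 1))"
    by (blast intro: hoare_seq)
  then show ?thesis
    using decider_time_bound[of n] marked_conflict_iff[OF A2] by (elim hoare_conseq) simp_all
qed

lemma input_mem_cell_1:
  assumes "dom xt \<subseteq> P V" "0 < n"
  shows "input_mem n e xt 1 = 0"
proof -
  have "xt (e 0, e 0) = None"
    using assms(1) by (auto simp: P_def)
  then show ?thesis
    using input_mem_entry[OF assms(2) assms(2), of e xt] by simp
qed

lemma input_mem_le_2: "ran xt \<subseteq> {0, 1} \<Longrightarrow> 0 < a \<Longrightarrow> input_mem n e xt a \<le> 2"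
  by (auto simp: input_mem_def ran_def split: option.split)

lemma input_mem_conflict_iff:
  fixes n :: nat and e :: "nat \<Rightarrow> 'a" and xt :: "('a \<times> 'a) \<rightharpoonup> nat"
  defines "A \<equiv> \<lambda>i j. input_mem n e xt (1 + i * n + j)"
  shows "(\<exists>i<n. \<exists>j<n. A i j = 1 \<and> fw_closure (\<lambda>i j. A i j = 2) n i j) \<longleftrightarrow>
    (\<exists>i<n. \<exists>j<n. xt (e i, e j) = Some 0 \<and> fw_closure (\<lambda>i j. xt (e i, e j) = Some 1) n i j)"
proof -
  have entry: "A i j = 2 \<longleftrightarrow> xt (e i, e j) = Some 1" "A i j = 1 \<longleftrightarrow> xt (e i, e j) = Some 0"
    if "i < n" "j < n" for i j
    using input_mem_entry[OF that, of e xt] unfolding A_def by (auto split: option.split)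
  then have "fw_closure (\<lambda>i j. A i j = 2) n i j = fw_closure (\<lambda>i j. xt (e i, e j) = Some 1) n i j"
    if "i < n" "j < n" for i j
    using that by (intro fw_closure_cong) auto
  with entry(2) show ?thesis
    by blast
qed

lemma decider_decides:
  fixes e :: "nat \<Rightarrow> 'a"
  assumes "bij_betw e {0..<n} V" "0 < n" "dom xt \<subseteq> P V" "ran xt \<subseteq> {0, 1}"
  defines "s \<equiv> run decider (100 * n ^ 3 + 100) (input_mem n e xt)"
  shows "halted decider s \<and> snd s 0 = (if completions V xt \<noteq> {} then 1 else 0)"
proof -
  define conflict where "conflict \<longleftrightarrow>
    (\<exists>i<n. \<exists>j<n. xt (e i, e j) = Some 0 \<and> fw_closure (\<lambda>i j. xt (e i, e j) = Some 1) n i j)"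
  have "input_mem n e xt 0 = n"
    by (simp add: input_mem_def)
  then have "halted decider s \<and> snd s 0 = (if conflict then 0 else 1)"
    using hoare_run[OF decider_correct[of "input_mem n e xt"] halted_decider_164]
      input_mem_cell_1[OF assms(3,2)] input_mem_le_2[OF assms(4)] input_mem_conflict_iff[of n e xt]
    unfolding s_def conflict_def by simp
  moreover have "completions V xt \<noteq> {} \<longleftrightarrow> \<not> conflict"
    using completions_nonempty_iff[OF assms(1,3,4)] unfolding conflict_def .
  ultimately show ?thesis
    by simp
qed

theorem proposition4p2:
  "\<exists>(prog :: instr list) (c :: nat) (k :: nat).
     \<forall>(V :: 'a set) (xt :: ('a \<times> 'a) \<rightharpoonup> nat) (e :: nat \<Rightarrow> 'a).
       finite V \<and> V \<noteq> {} \<and> dom xt \<subseteq> P V \<and> ran xt \<subseteq> {0, 1} \<and>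
       bij_betw e {0..<card V} V \<longrightarrow>
       (let s = run prog (c * card V ^ k + c) (input_mem (card V) e xt)
        in halted prog s \<and>
           snd s 0 = (if completions V xt \<noteq> {} then 1 else 0))"
proof (intro exI allI impI)
  fix V :: "'a set" and xt :: "('a \<times> 'a) \<rightharpoonup> nat" and e :: "nat \<Rightarrow> 'a"
  assume "finite V \<and> V \<noteq> {} \<and> dom xt \<subseteq> P V \<and> ran xt \<subseteq> {0, 1} \<and> bij_betw e {0..<card V} V"
  then show "let s = run decider (100 * card V ^ 3 + 100) (input_mem (card V) e xt)
      in halted decider s \<and> snd s 0 = (if completions V xt \<noteq> {} then 1 else 0)"
    using decider_decides[of e "card V" V xt] by (simp add: card_gt_0_iff)
qed

end
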